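(* Let $p,q,d,n$ be positive integers with $p>2q$ and $d\ge 3$, let $s$ be a special vertex of $U^n_{p,q,d}$ and let $\ell$ be an integer with $1\le \ell\le \bigl\lceil \tfrac{q}{p-2q}\bigr\rceil-1$. Then the set of vertices of $U^n_{p,q,d}$ at distance exactly $\ell$ from $s$ is an independent set.
   Context: For integers $1\le q\le p$, the Kneser graph $K_{p/q}$ has as vertices all $q$-element subsets of $[p]=\{1,\dots,p\}$, two being adjacent iff they are disjoint. The extension product of graphs $G$ and $H$ has vertex set $V(G)\times V(H)$, with $(u,v)$ adjacent to $(u',v')$ iff $uu'\in E(G)$ and either $v=v'$ or $vv'\in E(H)$. Let $N=n\binom{p}{q}$. If $d$ is even, let $S$ be the star $K_{1,N}$ with each edge subdivided $d/2-1$ times, and let $U^n_{p,q,d}$ be the extension product of $K_{p/q}$ and $S$. If $d$ is odd, let $L$ be the graph obtained from the clique $K_N$ by identifying each clique vertex with one endpoint of its own path on $(d+1)/2$ vertices (the other endpoints being the leaves of $L$), and let $U^n_{p,q,d}$ be the extension product of $K_{p/q}$ and $L$. In both cases the $N$ leaves $\lambda$ of $S$ (resp. $L$) are partitioned into $\binom pq$ groups of $n$ leaves indexed by the $q$-subsets $X$ of $[p]$, and for each leaf $\lambda$ in the group of $X$ the vertex $(X,\lambda)$ is called special. *)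

theory Defs
  imports Complex_Main
begin

definition walk :: "'a set \<Rightarrow> ('a \<Rightarrow> 'a \<Rightarrow> bool) \<Rightarrow> 'a list \<Rightarrow> bool" where
  "walk V E xs \<longleftrightarrow> xs \<noteq> [] \<and> set xs \<subseteq> V \<and>
     (\<forall>i < length xs - 1. E (xs ! i) (xs ! Suc i))"

definition dist_eq :: "'a set \<Rightarrow> ('a \<Rightarrow> 'a \<Rightarrow> bool) \<Rightarrow> 'a \<Rightarrow> 'a \<Rightarrow> nat \<Rightarrow> bool" where
  "dist_eq V E u v k \<longleftrightarrow>
     (\<exists>xs. walk V E xs \<and> hd xs = u \<and> last xs = v \<and> length xs = Suc k) \<and>
     (\<forall>xs. walk V E xs \<and> hd xs = u \<and> last xs = v \<longrightarrow> Suc k \<le> length xs)"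

definition independent_set :: "'a set \<Rightarrow> ('a \<Rightarrow> 'a \<Rightarrow> bool) \<Rightarrow> 'a set \<Rightarrow> bool" where
  "independent_set V E A \<longleftrightarrow> A \<subseteq> V \<and> (\<forall>x\<in>A. \<forall>y\<in>A. \<not> E x y)"

definition kneser_verts :: "nat \<Rightarrow> nat \<Rightarrow> nat set set" where
  "kneser_verts p q = {X. X \<subseteq> {1..p} \<and> card X = q}"

definition kneser_adj :: "nat set \<Rightarrow> nat set \<Rightarrow> bool" where
  "kneser_adj X Y \<longleftrightarrow> X \<inter> Y = {}"

text \<open>The N = n * (p choose q) leaves are indexed by pairs (X,k) with X a q-subset of [p]
  and k < n; the leaf (X,k) belongs to the group of X.  A vertex Some((X,k),j) is the
  j-th vertex (j >= 1) on the branch/path ending at leaf (X,k); None is the centre of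
  the star (d even only).\<close>

type_synonym tvert = "((nat set \<times> nat) \<times> nat) option"

definition leafpos :: "nat \<Rightarrow> nat" where
  "leafpos d = (if even d then d div 2 else (d + 1) div 2)"

definition T_verts :: "nat \<Rightarrow> nat \<Rightarrow> nat \<Rightarrow> nat \<Rightarrow> tvert set" where
  "T_verts p q n d =
     (if even d then {None} else {}) \<union>
     {Some ((X, k), j) | X k j. X \<in> kneser_verts p q \<and> k < n \<and> 1 \<le> j \<and> j \<le> leafpos d}"

definition path_adj :: "tvert \<Rightarrow> tvert \<Rightarrow> bool" where
  "path_adj a b \<longleftrightarrow> (\<exists>i j. (a = Some (i, j) \<and> b = Some (i, Suc j)) \<or>
                             (a = Some (i, Suc j) \<and> b = Some (i, j)))"

definition star_adj :: "tvert \<Rightarrow> tvert \<Rightarrow> bool" where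
  "star_adj a b \<longleftrightarrow> (a = None \<and> (\<exists>i. b = Some (i, 1))) \<or> (b = None \<and> (\<exists>i. a = Some (i, 1)))"

definition clique_adj :: "tvert \<Rightarrow> tvert \<Rightarrow> bool" where
  "clique_adj a b \<longleftrightarrow> (\<exists>i i'. i \<noteq> i' \<and> a = Some (i, 1) \<and> b = Some (i', 1))"

definition T_adj :: "nat \<Rightarrow> tvert \<Rightarrow> tvert \<Rightarrow> bool" where
  "T_adj d a b \<longleftrightarrow> path_adj a b \<or> (if even d then star_adj a b else clique_adj a b)"

definition U_verts :: "nat \<Rightarrow> nat \<Rightarrow> nat \<Rightarrow> nat \<Rightarrow> (nat set \<times> tvert) set" where
  "U_verts p q n d = kneser_verts p q \<times> T_verts p q n d"

definition U_adj :: "nat \<Rightarrow> nat set \<times> tvert \<Rightarrow> nat set \<times> tvert \<Rightarrow> bool" where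
  "U_adj d x y \<longleftrightarrow> kneser_adj (fst x) (fst y) \<and> (snd x = snd y \<or> T_adj d (snd x) (snd y))"

definition special :: "nat \<Rightarrow> nat \<Rightarrow> nat \<Rightarrow> nat \<Rightarrow> nat set \<times> tvert \<Rightarrow> bool" where
  "special p q n d s \<longleftrightarrow>
     (\<exists>X k. X \<in> kneser_verts p q \<and> k < n \<and> s = (X, Some ((X, k), leafpos d)))"

end

theory Submission
  imports Defs
begin

text \<open>
  Two vertices v, w at distance l from s are joined to s by walks of
  length l; if v and w were adjacent, these two walks together with the edge vw would
  form a closed walk of odd length 2l+1 through s.  Projecting U^n_{p,q,d} onto its
  first coordinate is a graph homomorphism to the Kneser graph K_{p/q} (the edges of
  the extension product are disjoint in the Kneser coordinate), so K_{p/q} would contain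
  a closed walk of length 2l+1.  But in K_{p/q} two steps along a walk decrease the
  overlap with the starting set by at most p-2q, so a closed walk of length 2l+1
  forces q \<le> l(p-2q), i.e. l \<ge> q/(p-2q), contradicting the bound on l.
\<close>

lemma walk_iff_successively:
  "walk V E xs \<longleftrightarrow> xs \<noteq> [] \<and> set xs \<subseteq> V \<and> successively E xs"
  unfolding walk_def successively_conv_nth by (auto simp: less_diff_conv)

lemma walk_map:
  assumes "walk V E xs"
    and hom_vert: "\<And>x. x \<in> V \<Longrightarrow> f x \<in> W"
    and hom_edge: "\<And>x y. x \<in> V \<Longrightarrow> y \<in> V \<Longrightarrow> E x y \<Longrightarrow> F (f x) (f y)"
  shows "walk W F (map f xs)"
proof -
  have "successively E xs" "set xs \<subseteq> V" "xs \<noteq> []"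
    using assms(1) by (auto simp: walk_iff_successively)
  then have "successively (\<lambda>x y. F (f x) (f y)) xs"
    by (auto intro: successively_mono hom_edge)
  then show ?thesis
    using \<open>set xs \<subseteq> V\<close> \<open>xs \<noteq> []\<close> hom_vert
    by (auto simp: walk_iff_successively successively_map)
qed

lemma walk_append_rev:
  assumes sym: "\<And>x y. E x y \<Longrightarrow> E y x"
    and "walk V E xs" "walk V E ys" "E (last xs) (last ys)"
  shows "walk V E (xs @ rev ys)"
proof -
  have "successively (\<lambda>x y. E y x) ys"
    using assms(3) by (auto simp: walk_iff_successively intro: successively_mono sym)
  then show ?thesis
    using assms(2-4) by (auto simp: walk_iff_successively successively_append_iff hd_rev)
qed

text \<open>If the q-sets B and C are both disjoint from the q-set D inside [p], then B and C
  differ in at most p-2q elements, so the overlap of any set A with B exceeds its overlap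
  with C by at most p-2q.\<close>
lemma card_inter_common_neighbour:
  fixes A B C D :: "nat set"
  assumes "B \<subseteq> {1..p}" "C \<subseteq> {1..p}" "D \<subseteq> {1..p}"
    and "card B = q" "card C = q" "card D = q" "B \<inter> D = {}" "C \<inter> D = {}"
  shows "card (A \<inter> B) \<le> card (A \<inter> C) + (p - 2 * q)"
proof -
  have fin: "finite B" "finite C" "finite D"
    using assms(1-3) finite_subset by blast+
  have "A \<inter> B \<subseteq> (A \<inter> C) \<union> (B - C)" by blast
  then have "card (A \<inter> B) \<le> card (A \<inter> C) + card (B - C)"
    by (meson card_Un_le card_mono fin finite_Diff finite_Int finite_UnI le_trans)
  moreover have "card (B - C) \<le> p - 2 * q"
  proof -
    have "B \<union> C \<subseteq> {1..p} - D" using assms by blast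
    then have "card (B \<union> C) \<le> p - q"
      using card_mono[of "{1..p} - D" "B \<union> C"] card_Diff_subset[OF fin(3) assms(3)] assms(6)
      by simp
    moreover have "card (B \<union> C) = card (B - C) + card C"
      using fin by (metis Un_Diff_cancel2 card_Un_disjoint Diff_disjoint inf_commute finite_Diff)
    ultimately show ?thesis using assms(5) by simp
  qed
  ultimately show ?thesis by simp
qed

lemma kneser_walk_overlap:
  assumes walk: "walk (kneser_verts p q) kneser_adj xs"
  shows "2 * j < length xs \<Longrightarrow> q \<le> card (xs ! 0 \<inter> xs ! (2 * j)) + j * (p - 2 * q)"
proof -
  have vert: "xs ! i \<subseteq> {1..p} \<and> card (xs ! i) = q" if "i < length xs" for i
    using walk nth_mem[OF that] unfolding walk_iff_successively kneser_verts_def by blast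
  have edge: "xs ! i \<inter> xs ! Suc i = {}" if "Suc i < length xs" for i
    using walk successively_nth[OF _ that]
    unfolding walk_iff_successively kneser_adj_def by blast
  show "2 * j < length xs \<Longrightarrow> q \<le> card (xs ! 0 \<inter> xs ! (2 * j)) + j * (p - 2 * q)"
  proof (induction j)
    case 0
    then show ?case using vert[of 0] by simp
  next
    case (Suc j)
    have "card (xs ! 0 \<inter> xs ! (2 * j)) \<le> card (xs ! 0 \<inter> xs ! (2 * j + 2)) + (p - 2 * q)"
      using Suc.prems vert[of "2 * j"] vert[of "2 * j + 1"] vert[of "2 * j + 2"]
        edge[of "2 * j"] edge[of "2 * j + 1"]
      by (intro card_inter_common_neighbour[where D = "xs ! (2 * j + 1)"]) (auto simp: Int_commute)
    with Suc show ?case by simp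
  qed
qed

lemma kneser_odd_closed_walk:
  assumes walk: "walk (kneser_verts p q) kneser_adj xs"
    and len: "length xs = 2 * l + 2" and closed: "last xs = hd xs"
  shows "q \<le> l * (p - 2 * q)"
proof -
  have "xs ! (2 * l) \<inter> xs ! Suc (2 * l) = {}"
    using walk successively_nth[of kneser_adj xs "2 * l"] len
    unfolding walk_iff_successively kneser_adj_def by simp
  moreover have "xs ! Suc (2 * l) = xs ! 0"
    using closed len by (simp add: last_conv_nth hd_conv_nth flip: length_greater_0_conv)
  ultimately have "xs ! 0 \<inter> xs ! (2 * l) = {}" by auto
  then show ?thesis
    using kneser_walk_overlap[OF walk, of l] len by simp
qed

lemma U_walk_project:
  assumes "walk (U_verts p q n d) (U_adj d) xs"
  shows "walk (kneser_verts p q) kneser_adj (map fst xs)"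
  using assms by (rule walk_map) (auto simp: U_verts_def U_adj_def)

lemma below_ceiling_minus_one:
  fixes l a b :: nat
  assumes "int l \<le> \<lceil>real a / real b\<rceil> - 1" and "0 < b"
  shows "l * b < a"
proof -
  have "real l < real a / real b"
    using assms(1) by (simp add: less_ceiling_iff)
  then have "real (l * b) < real a"
    using assms(2) by (simp add: field_simps)
  then show ?thesis by linarith
qed

theorem mainTheorem4:
  fixes p q d n l :: nat and s :: "nat set \<times> tvert"
  assumes "0 < p" "0 < q" "0 < d" "0 < n"
    and "2 * q < p" and "3 \<le> d"
    and "special p q n d s"
    and "1 \<le> l" and "int l \<le> \<lceil>real q / real (p - 2 * q)\<rceil> - 1"
  shows "independent_set (U_verts p q n d) (U_adj d)
           {v \<in> U_verts p q n d. dist_eq (U_verts p q n d) (U_adj d) s v l}"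
  unfolding independent_set_def
proof (intro conjI ballI notI; clarsimp)
  fix v w
  assume "dist_eq (U_verts p q n d) (U_adj d) s v l" "dist_eq (U_verts p q n d) (U_adj d) s w l"
    and adj: "U_adj d v w"
  then obtain xs ys where
    xs: "walk (U_verts p q n d) (U_adj d) xs" "hd xs = s" "last xs = v" "length xs = Suc l" and
    ys: "walk (U_verts p q n d) (U_adj d) ys" "hd ys = s" "last ys = w" "length ys = Suc l"
    unfolding dist_eq_def by blast
  let ?cycle = "map fst xs @ rev (map fst ys)"
  have "kneser_adj (last (map fst xs)) (last (map fst ys))"
    using adj xs(3,4) ys(3,4) by (simp add: last_map U_adj_def flip: length_greater_0_conv)
  then have "walk (kneser_verts p q) kneser_adj ?cycle"
    using xs(1) ys(1)
    by (intro walk_append_rev U_walk_project) (auto simp: kneser_adj_def Int_commute)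
  moreover have "length ?cycle = 2 * l + 2"
    using xs(4) ys(4) by simp
  moreover have "last ?cycle = hd ?cycle"
    using xs(2,4) ys(2,4) by (simp add: last_rev hd_map flip: length_greater_0_conv)
  ultimately have "q \<le> l * (p - 2 * q)"
    by (rule kneser_odd_closed_walk)
  moreover have "l * (p - 2 * q) < q"
    using assms(5,9) by (intro below_ceiling_minus_one) auto
  ultimately show False by simp
qed

end
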